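(* Let $f,g$ be complex-valued functions of two variables with $f\perp g$. Let $\{a_i\}_{i\in\mathbb{Z}},\{b_i\}_{i\in\mathbb{Z}},\{c_i\}_{i\in\mathbb{Z}},\{d_i\}_{i\in\mathbb{Z}}$ be sequences, and let $m,n\ge 0$ be integers such that $f(a_j,c_j),f(a_j,d_j),g(b_j,c_j),g(b_j,d_j)$ are all nonzero for $-n\le j\le m$. Then $$\sum_{k=-n}^{m} f(a_k,b_k)g(c_k,d_k)\frac{\prod_{j=1}^{k-1}f(a_j,c_j)}{\prod_{j=1}^{k}f(a_j,d_j)}\frac{\prod_{j=1}^{k-1}g(b_j,d_j)}{\prod_{j=1}^{k}g(b_j,c_j)} =\frac{\prod_{j=1}^{m}f(a_j,c_j)}{\prod_{j=1}^{m}f(a_j,d_j)}\frac{\prod_{j=1}^{m}g(b_j,d_j)}{\prod_{j=1}^{m}g(b_j,c_j)}-\frac{\prod_{j=-n}^{0}f(a_j,d_j)}{\prod_{j=-n}^{0}f(a_j,c_j)}\frac{\prod_{j=-n}^{0}g(b_j,c_j)}{\prod_{j=-n}^{0}g(b_j,d_j)}.$$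
   Context: $f\perp g$ means $g(u,v)f(z,w)-g(u,w)f(z,v)+g(v,w)f(z,u)=0$ for all $u,v,w,z$. Products over integer ranges follow the convention: $\prod_{j=k}^{m}A_j=A_kA_{k+1}\cdots A_m$ if $m\ge k$; $=1$ if $m=k-1$; $=(A_{m+1}A_{m+2}\cdots A_{k-1})^{-1}$ if $m\le k-2$. *)

theory Defs
  imports Complex_Main
begin

definition orth :: "('a \<Rightarrow> 'a \<Rightarrow> complex) \<Rightarrow> ('a \<Rightarrow> 'a \<Rightarrow> complex) \<Rightarrow> bool" where
  "orth f g \<longleftrightarrow> (\<forall>u v w z. g u v * f z w - g u w * f z v + g v w * f z u = 0)"

text \<open>Products over integer ranges with the paper's convention:
  k..m if m \<ge> k; 1 if m = k-1; inverse of product over m+1..k-1 if m \<le> k-2.\<close>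
definition gprod :: "(int \<Rightarrow> complex) \<Rightarrow> int \<Rightarrow> int \<Rightarrow> complex" where
  "gprod A k m = (if m \<ge> k then (\<Prod>j\<in>{k..m}. A j)
                  else if m = k - 1 then 1
                  else inverse (\<Prod>j\<in>{m+1..k-1}. A j))"

end

theory Submission
  imports Defs
begin

text \<open>Writing \<open>T k\<close> for the product of the two ratios on the right-hand side with upper
  index \<open>k\<close> (so that the subtracted term is \<open>T (-n-1)\<close>), the relation \<open>f \<perp> g\<close> turns the
  \<open>k\<close>-th summand into \<open>T k - T (k - 1)\<close>, and the sum telescopes. The paper's convention
  for \<open>gprod\<close> is exactly what makes \<open>gprod A l k = gprod A l (k - 1) * A k\<close> hold for
  every integer \<open>k\<close>, negative ones included.\<close>

lemma orth_three_term:
  assumes "orth f g"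
  shows "f z u * g v w = f z v * g u w - f z w * g u v"
proof -
  have "g u v * f z w - g u w * f z v + g v w * f z u = 0"
    using assms unfolding orth_def by blast
  then show ?thesis by (simp add: algebra_simps eq_diff_eq)
qed

lemma gprod_extend_right:
  assumes "A k \<noteq> 0"
  shows "gprod A l k = gprod A l (k - 1) * A k"
proof -
  consider "l < k" | "k = l" | "k = l - 1" | "k < l - 1" by linarith
  then show ?thesis
  proof cases
    case 1
    then have "{l..k} = insert k {l..k - 1}" by auto
    with 1 show ?thesis by (simp add: gprod_def mult.commute)
  next
    case 2
    then show ?thesis by (simp add: gprod_def)
  next
    case 3
    with assms show ?thesis by (simp add: gprod_def)
  next
    case 4
    then have "{k..l - 1} = insert k {k + 1..l - 1}" by auto
    with 4 assms show ?thesis by (simp add: gprod_def)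
  qed
qed

lemma gprod_below:
  assumes "k < l"
  shows "gprod A l (k - 1) = inverse (gprod A k (l - 1))"
  using assms by (simp add: gprod_def)

lemma gprod_ratio_diff:
  fixes p q r s :: "int \<Rightarrow> complex"
  assumes "p k \<noteq> 0" "q k \<noteq> 0" "r k \<noteq> 0" "s k \<noteq> 0"
  shows "gprod p l k / gprod q l k * (gprod s l k / gprod r l k)
           - gprod p l (k - 1) / gprod q l (k - 1) * (gprod s l (k - 1) / gprod r l (k - 1))
         = (p k * s k - q k * r k)
             * (gprod p l (k - 1) / gprod q l k) * (gprod s l (k - 1) / gprod r l k)"
proof -
  define T where "T = gprod p l (k - 1) / gprod q l (k - 1) * (gprod s l (k - 1) / gprod r l (k - 1))"
  have extend: "gprod p l k = gprod p l (k - 1) * p k" "gprod q l k = gprod q l (k - 1) * q k"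
    "gprod r l k = gprod r l (k - 1) * r k" "gprod s l k = gprod s l (k - 1) * s k"
    using assms by (simp_all add: gprod_extend_right)
  \<comment> \<open>no nonvanishing of the partial products is needed, as \<open>inverse\<close> is multiplicative\<close>
  have current: "gprod p l k / gprod q l k * (gprod s l k / gprod r l k) = T * (p k * s k) / (q k * r k)"
    and mixed: "gprod p l (k - 1) / gprod q l k * (gprod s l (k - 1) / gprod r l k) = T / (q k * r k)"
    unfolding T_def extend by (simp_all add: divide_inverse mult_ac)
  have "T * (p k * s k) / (q k * r k) - T = (p k * s k - q k * r k) * (T / (q k * r k))"
    using assms by (simp add: field_simps)
  then show ?thesis
    by (simp only: current mixed T_def[symmetric] mult.assoc)
qed

lemma sum_int_telescope:
  fixes h :: "int \<Rightarrow> 'b::ab_group_add"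
  assumes "l - 1 \<le> m"
  shows "(\<Sum>k\<in>{l..m}. h k - h (k - 1)) = h m - h (l - 1)"
  using assms
proof (induction m rule: int_ge_induct)
  case base
  then show ?case by simp
next
  case (step i)
  then have "{l..i + 1} = insert (i + 1) {l..i}" by auto
  with step show ?case by simp
qed

theorem theorem3p1:
  fixes f g :: "'a \<Rightarrow> 'a \<Rightarrow> complex"
    and a b c d :: "int \<Rightarrow> 'a"
    and m n :: int
  assumes "orth f g"
    and "m \<ge> 0" and "n \<ge> 0"
    and "\<And>j. - n \<le> j \<Longrightarrow> j \<le> m \<Longrightarrow>
           f (a j) (c j) \<noteq> 0 \<and> f (a j) (d j) \<noteq> 0 \<and> g (b j) (c j) \<noteq> 0 \<and> g (b j) (d j) \<noteq> 0"
  shows "(\<Sum>k\<in>{-n..m}. f (a k) (b k) * g (c k) (d k)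
            * (gprod (\<lambda>j. f (a j) (c j)) 1 (k - 1) / gprod (\<lambda>j. f (a j) (d j)) 1 k)
            * (gprod (\<lambda>j. g (b j) (d j)) 1 (k - 1) / gprod (\<lambda>j. g (b j) (c j)) 1 k))
       = (gprod (\<lambda>j. f (a j) (c j)) 1 m / gprod (\<lambda>j. f (a j) (d j)) 1 m)
           * (gprod (\<lambda>j. g (b j) (d j)) 1 m / gprod (\<lambda>j. g (b j) (c j)) 1 m)
         - (gprod (\<lambda>j. f (a j) (d j)) (- n) 0 / gprod (\<lambda>j. f (a j) (c j)) (- n) 0)
           * (gprod (\<lambda>j. g (b j) (c j)) (- n) 0 / gprod (\<lambda>j. g (b j) (d j)) (- n) 0)"
proof -
  let ?fc = "\<lambda>j. f (a j) (c j)" and ?fd = "\<lambda>j. f (a j) (d j)"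
    and ?gc = "\<lambda>j. g (b j) (c j)" and ?gd = "\<lambda>j. g (b j) (d j)"
  define T where "T k = gprod ?fc 1 k / gprod ?fd 1 k * (gprod ?gd 1 k / gprod ?gc 1 k)" for k
  have "f (a k) (b k) * g (c k) (d k) * (gprod ?fc 1 (k - 1) / gprod ?fd 1 k)
          * (gprod ?gd 1 (k - 1) / gprod ?gc 1 k) = T k - T (k - 1)" if "k \<in> {-n..m}" for k
    using gprod_ratio_diff[of ?fc k ?fd ?gc ?gd 1] assms(4)[of k] that
    unfolding T_def orth_three_term[OF assms(1), of "a k" "b k" "c k" "d k"] by simp
  then have "(\<Sum>k\<in>{-n..m}. f (a k) (b k) * g (c k) (d k) * (gprod ?fc 1 (k - 1) / gprod ?fd 1 k)
               * (gprod ?gd 1 (k - 1) / gprod ?gc 1 k)) = (\<Sum>k\<in>{-n..m}. T k - T (k - 1))"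
    by (rule sum.cong[OF refl])
  also have "\<dots> = T m - T (-n - 1)"
    using assms(2,3) by (simp add: sum_int_telescope)
  also have "T (-n - 1) = gprod ?fd (-n) 0 / gprod ?fc (-n) 0 * (gprod ?gc (-n) 0 / gprod ?gd (-n) 0)"
    using assms(3) by (simp add: T_def gprod_below divide_inverse mult_ac)
  finally show ?thesis
    by (simp only: T_def)
qed

end
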